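(* Let $N\ge1$, $n_1,\dots,n_N\ge1$, $n=\sum_\nu n_\nu$, $m\ge1$. For $\nu=1,\dots,N$ let $Q_\nu\in\mathbb{R}^{n_\nu\times n_\nu}$ be symmetric positive definite, $c_\nu\in\mathbb{R}^{n_\nu}$, and let $X_\nu\subseteq\mathbb{R}^{n_\nu}$ be nonempty with $X=X_1\times\dots\times X_N$ convex and compact. Let $a\in\mathbb{R}^m$ with $a\ge0$ componentwise, $Q_y\in\mathbb{R}^{m\times m}$ positive definite and diagonal, and let $b,l:\mathbb{R}^n\to\mathbb{R}^m$ be differentiable and componentwise convex on $X$. Consider the Nash equilibrium problem (NEP) in which player $\nu$ solves $$\min_{x_\nu}\ \tfrac12 x_\nu^\top Q_\nu x_\nu+c_\nu^\top x_\nu+\sum_{i=1}^m a_i\max\{(Q_y^{-1}b(x))_i,\,l_i(x)\}\quad\text{s.t. } x_\nu\in X_\nu,$$ with $x=(x_\nu,x_{-\nu})$. Then this NEP has at least one Nash equilibrium. Consequently, the multi-leader-follower game described in the context has at least one Nash equilibrium.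
   Context: Notation: $x=(x_1,\dots,x_N)\in\mathbb{R}^n$ with $x_\nu\in\mathbb{R}^{n_\nu}$, and $x_{-\nu}$ denotes the vector of all $x_i$, $i\ne\nu$. The multi-leader-follower game (MLFG): given the leaders' strategies $x$, the follower solves $\min_{y\in\mathbb{R}^m}\tfrac12 y^\top Q_y y-b(x)^\top y$ s.t. $y\ge l(x)$; its unique solution (best response) is $y(x)=\max\{Q_y^{-1}b(x),l(x)\}$ (componentwise). Leader $\nu$ solves $\min_{x_\nu\in X_\nu}\theta_\nu(x_\nu,x_{-\nu})=\tfrac12 x_\nu^\top Q_\nu x_\nu+c_\nu^\top x_\nu+a^\top y(x)$. A Nash equilibrium (of the NEP or the MLFG) is a point $x^*\in X$ such that for every $\nu$, $x^*_\nu$ minimizes player $\nu$'s objective over $X_\nu$ with $x_{-\nu}=x^*_{-\nu}$ fixed. *)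

theory Defs
  imports "HOL-Analysis.Analysis"
begin

text \<open>The coordinates are partitioned among the players 'p by owner :: 'n \<Rightarrow> 'p;
  block nu = {i. owner i = nu} has size n_nu.  A strategy of player nu (an element of
  R^{n_nu}) is represented as a function 'n \<Rightarrow> real vanishing outside block nu.\<close>

definition block :: "('n \<Rightarrow> 'p) \<Rightarrow> 'p \<Rightarrow> 'n set" where
  "block owner nu = {i. owner i = nu}"

definition blockvec :: "('n::finite \<Rightarrow> 'p) \<Rightarrow> 'p \<Rightarrow> real^'n \<Rightarrow> ('n \<Rightarrow> real)" where
  "blockvec owner nu x = (\<lambda>i. if owner i = nu then x $ i else 0)"

definition replace_block :: "('n::finite \<Rightarrow> 'p) \<Rightarrow> 'p \<Rightarrow> ('n \<Rightarrow> real) \<Rightarrow> real^'n \<Rightarrow> real^'n" where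
  "replace_block owner nu z x = (\<chi> i. if owner i = nu then z i else x $ i)"

definition prod_set :: "('n::finite \<Rightarrow> 'p) \<Rightarrow> ('p \<Rightarrow> ('n \<Rightarrow> real) set) \<Rightarrow> (real^'n) set" where
  "prod_set owner Xs = {x. \<forall>nu. blockvec owner nu x \<in> Xs nu}"

definition is_nash_eq :: "('n::finite \<Rightarrow> 'p) \<Rightarrow> ('p \<Rightarrow> ('n \<Rightarrow> real) set)
    \<Rightarrow> ('p \<Rightarrow> real^'n \<Rightarrow> real) \<Rightarrow> real^'n \<Rightarrow> bool" where
  "is_nash_eq owner Xs theta x \<longleftrightarrow> x \<in> prod_set owner Xs \<and>
     (\<forall>nu. \<forall>z \<in> Xs nu. theta nu x \<le> theta nu (replace_block owner nu z x))"

definition leader_quad :: "('n::finite \<Rightarrow> 'p) \<Rightarrow> ('p \<Rightarrow> 'n \<Rightarrow> 'n \<Rightarrow> real) \<Rightarrow> ('p \<Rightarrow> 'n \<Rightarrow> real)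
    \<Rightarrow> 'p \<Rightarrow> real^'n \<Rightarrow> real" where
  "leader_quad owner Q c nu x =
     (1/2) * (\<Sum>i\<in>block owner nu. \<Sum>j\<in>block owner nu. x $ i * Q nu i j * x $ j)
     + (\<Sum>i\<in>block owner nu. c nu i * x $ i)"

definition nep_obj :: "('n::finite \<Rightarrow> 'p) \<Rightarrow> ('p \<Rightarrow> 'n \<Rightarrow> 'n \<Rightarrow> real) \<Rightarrow> ('p \<Rightarrow> 'n \<Rightarrow> real)
    \<Rightarrow> real^'m::finite \<Rightarrow> real^'m^'m \<Rightarrow> (real^'n \<Rightarrow> real^'m) \<Rightarrow> (real^'n \<Rightarrow> real^'m)
    \<Rightarrow> 'p \<Rightarrow> real^'n \<Rightarrow> real" where
  "nep_obj owner Q c a Qy b l nu x = leader_quad owner Q c nu x +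
     (\<Sum>i\<in>UNIV. a $ i * max ((matrix_inv Qy *v b x) $ i) (l x $ i))"

definition follower_obj :: "real^'m^'m \<Rightarrow> real^'m \<Rightarrow> real^'m::finite \<Rightarrow> real" where
  "follower_obj Qy bx y = (1/2) * (y \<bullet> (Qy *v y)) - bx \<bullet> y"

definition follower_resp :: "real^'m^'m \<Rightarrow> (real^'n \<Rightarrow> real^'m) \<Rightarrow> (real^'n \<Rightarrow> real^'m)
    \<Rightarrow> real^'n \<Rightarrow> real^'m::finite" where
  "follower_resp Qy b l x = (THE y. (\<forall>i. l x $ i \<le> y $ i) \<and>
      (\<forall>y'. (\<forall>i. l x $ i \<le> y' $ i) \<longrightarrow> follower_obj Qy (b x) y \<le> follower_obj Qy (b x) y'))"

definition mlfg_obj :: "('n::finite \<Rightarrow> 'p) \<Rightarrow> ('p \<Rightarrow> 'n \<Rightarrow> 'n \<Rightarrow> real) \<Rightarrow> ('p \<Rightarrow> 'n \<Rightarrow> real)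
    \<Rightarrow> real^'m::finite \<Rightarrow> real^'m^'m \<Rightarrow> (real^'n \<Rightarrow> real^'m) \<Rightarrow> (real^'n \<Rightarrow> real^'m)
    \<Rightarrow> 'p \<Rightarrow> real^'n \<Rightarrow> real" where
  "mlfg_obj owner Q c a Qy b l nu x = leader_quad owner Q c nu x + a \<bullet> follower_resp Qy b l x"

end

theory Submission
  imports Defs
begin

text \<open>The shared term \<open>a\<^sup>T max{Q\<^sub>y\<^sup>-\<^sup>1 b(x), l(x)}\<close> enters every leader's objective
  unchanged, while the quadratic part of leader \<open>\<nu>\<close> depends on \<open>x\<^sub>\<nu>\<close> only. Hence the
  sum of all quadratic parts plus the shared term is an exact potential of the NEP, and a
  minimiser of this continuous function over the compact set \<open>X\<close> is a Nash equilibrium.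
  Because \<open>Q\<^sub>y\<close> is diagonal, the follower's problem splits into one-dimensional problems
  \<open>min {q y\<^sup>2/2 - \<beta> y : y \<ge> l}\<close>, whose solutions are \<open>max{\<beta>/q, l}\<close>; so the leaders'
  objectives in the MLFG coincide with those of the NEP.\<close>

lemma matrix_inv_unique:
  fixes A :: "'a::semiring_1^'n^'n"
  assumes "A ** B = mat 1" and "B ** A = mat 1"
  shows "matrix_inv A = B"
proof -
  have "A ** matrix_inv A = mat 1 \<and> matrix_inv A ** A = mat 1"
    unfolding matrix_inv_def by (rule someI[of _ B]) (use assms in blast)
  then show ?thesis
    by (metis assms(1) matrix_mul_assoc matrix_mul_lid matrix_mul_rid)
qed

lemma diagonal_matrix_vector_mult_nth:
  fixes D :: "'a::comm_semiring_1^'n^'n"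
  assumes "\<And>i j. i \<noteq> j \<Longrightarrow> D $ i $ j = 0"
  shows "(D *v v) $ i = D $ i $ i * v $ i"
proof -
  have "(\<Sum>j\<in>UNIV. D $ i $ j * v $ j) = (\<Sum>j\<in>UNIV. if j = i then D $ i $ i * v $ i else 0)"
    by (rule sum.cong) (auto simp: assms)
  then show ?thesis
    by (simp add: matrix_vector_mult_def)
qed

lemma matrix_inv_diagonal_mult:
  fixes D :: "'a::field^'n^'n"
  assumes diag: "\<And>i j. i \<noteq> j \<Longrightarrow> D $ i $ j = 0"
    and nonzero: "\<And>i. D $ i $ i \<noteq> 0"
  shows "matrix_inv D *v v = (\<chi> i. v $ i / D $ i $ i)"
proof -
  define E :: "'a^'n^'n" where "E = (\<chi> i j. if i = j then inverse (D $ i $ i) else 0)"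
  have "D ** E = mat 1" "E ** D = mat 1"
    using diag nonzero
    by (auto simp: E_def matrix_matrix_mult_def mat_def vec_eq_iff sum.delta'
             if_distrib[of "\<lambda>d. _ * d"] if_distrib[of "\<lambda>d. d * _"] cong: if_cong)
  then have "matrix_inv D = E"
    by (rule matrix_inv_unique)
  moreover have "E $ i $ j = 0" if "i \<noteq> j" for i j
    using that by (simp add: E_def)
  ultimately show ?thesis
    by (simp add: vec_eq_iff diagonal_matrix_vector_mult_nth E_def divide_inverse mult.commute)
qed

lemma half_line_quadratic_min_gap:
  fixes q \<beta> l y :: real
  assumes "q > 0" and "l \<le> y"
  defines "m \<equiv> max (\<beta> / q) l"
  shows "q / 2 * (y - m)\<^sup>2 \<le> (q / 2 * y\<^sup>2 - \<beta> * y) - (q / 2 * m\<^sup>2 - \<beta> * m)"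
proof -
  \<comment> \<open>first-order optimality of \<open>m\<close> on the half-line \<open>[l, \<infinity>)\<close>\<close>
  have "0 \<le> (y - m) * (q * m - \<beta>)"
  proof (cases "l \<le> \<beta> / q")
    case True
    then show ?thesis using \<open>q > 0\<close> by (simp add: m_def)
  next
    case False
    then have "\<beta> < q * l" using \<open>q > 0\<close> by (simp add: field_simps)
    then show ?thesis using False \<open>l \<le> y\<close> by (simp add: m_def)
  qed
  moreover have "(q / 2 * y\<^sup>2 - \<beta> * y) - (q / 2 * m\<^sup>2 - \<beta> * m)
      = (y - m) * (q * m - \<beta>) + q / 2 * (y - m)\<^sup>2"
    by (simp add: algebra_simps power2_eq_square)
  ultimately show ?thesis
    by linarith
qed

lemma follower_obj_diagonal:
  assumes "\<And>i j. i \<noteq> j \<Longrightarrow> Qy $ i $ j = 0"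
  shows "follower_obj Qy bx y = (\<Sum>i\<in>UNIV. Qy $ i $ i / 2 * (y $ i)\<^sup>2 - bx $ i * y $ i)"
  unfolding follower_obj_def inner_vec_def
  by (simp add: diagonal_matrix_vector_mult_nth[OF assms] sum_subtractf sum_distrib_left power2_eq_square mult_ac)

lemma follower_obj_diagonal_gap:
  fixes Qy :: "real^'m::finite^'m" and bx lx y :: "real^'m"
  assumes diag: "\<And>i j. i \<noteq> j \<Longrightarrow> Qy $ i $ j = 0"
    and pos: "\<And>i. Qy $ i $ i > 0"
    and feasible: "\<And>i. lx $ i \<le> y $ i"
  defines "m \<equiv> \<chi> i. max (bx $ i / Qy $ i $ i) (lx $ i)"
  shows "(\<Sum>i\<in>UNIV. Qy $ i $ i / 2 * (y $ i - m $ i)\<^sup>2)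
           \<le> follower_obj Qy bx y - follower_obj Qy bx m"
proof -
  have "(\<Sum>i\<in>UNIV. Qy $ i $ i / 2 * (y $ i - m $ i)\<^sup>2)
          \<le> (\<Sum>i\<in>UNIV. (Qy $ i $ i / 2 * (y $ i)\<^sup>2 - bx $ i * y $ i)
                        - (Qy $ i $ i / 2 * (m $ i)\<^sup>2 - bx $ i * m $ i))"
    unfolding m_def vec_lambda_beta by (intro sum_mono half_line_quadratic_min_gap pos feasible)
  also have "\<dots> = follower_obj Qy bx y - follower_obj Qy bx m"
    by (simp add: follower_obj_diagonal[OF diag] sum_subtractf)
  finally show ?thesis .
qed

lemma follower_resp_diagonal:
  fixes Qy :: "real^'m::finite^'m"
  assumes diag: "\<And>i j. i \<noteq> j \<Longrightarrow> Qy $ i $ j = 0"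
    and pos: "\<And>i. Qy $ i $ i > 0"
  shows "follower_resp Qy b l x = (\<chi> i. max ((matrix_inv Qy *v b x) $ i) (l x $ i))"
proof -
  have nonzero: "Qy $ i $ i \<noteq> 0" for i
    using pos[of i] by simp
  define m where "m = (\<chi> i. max (b x $ i / Qy $ i $ i) (l x $ i))"
  define wdist where "wdist y = (\<Sum>i\<in>UNIV. Qy $ i $ i / 2 * (y $ i - m $ i)\<^sup>2)" for y
  have wdist_terms_nonneg: "0 \<le> Qy $ i $ i / 2 * (y $ i - m $ i)\<^sup>2" for y i
    using pos[of i] by simp
  then have wdist_nonneg: "0 \<le> wdist y" for y
    unfolding wdist_def by (simp add: sum_nonneg)
  have gap: "wdist y \<le> follower_obj Qy (b x) y - follower_obj Qy (b x) m"
    if "\<forall>i. l x $ i \<le> y $ i" for y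
    unfolding wdist_def m_def by (rule follower_obj_diagonal_gap[OF diag pos that[rule_format]])
  have "follower_resp Qy b l x = m"
    unfolding follower_resp_def
  proof (rule the_equality)
    have "follower_obj Qy (b x) m \<le> follower_obj Qy (b x) y" if "\<forall>i. l x $ i \<le> y $ i" for y
      using gap[OF that] wdist_nonneg[of y] by linarith
    then show "(\<forall>i. l x $ i \<le> m $ i) \<and> (\<forall>y. (\<forall>i. l x $ i \<le> y $ i) \<longrightarrow>
                 follower_obj Qy (b x) m \<le> follower_obj Qy (b x) y)"
      by (simp add: m_def)
  next
    fix y
    assume y: "(\<forall>i. l x $ i \<le> y $ i) \<and> (\<forall>y'. (\<forall>i. l x $ i \<le> y' $ i) \<longrightarrow>
                 follower_obj Qy (b x) y \<le> follower_obj Qy (b x) y')"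
    then have "follower_obj Qy (b x) y \<le> follower_obj Qy (b x) m"
      by (simp add: m_def)
    then have "wdist y = 0"
      using gap[OF conjunct1[OF y]] wdist_nonneg[of y] by linarith
    then have "Qy $ k $ k / 2 * (y $ k - m $ k)\<^sup>2 = 0" for k
      unfolding wdist_def
      by (metis (no_types, lifting) wdist_terms_nonneg finite sum_nonneg_eq_0_iff UNIV_I)
    then show "y = m"
      using nonzero by (simp add: vec_eq_iff)
  qed
  then show ?thesis
    by (simp add: m_def matrix_inv_diagonal_mult[OF diag nonzero])
qed

definition exact_potential :: "('n::finite \<Rightarrow> 'p) \<Rightarrow> ('p \<Rightarrow> real^'n \<Rightarrow> real) \<Rightarrow> (real^'n \<Rightarrow> real) \<Rightarrow> bool"
  where "exact_potential owner theta P \<longleftrightarrow>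
    (\<forall>nu z x. P (replace_block owner nu z x) - P x
               = theta nu (replace_block owner nu z x) - theta nu x)"

lemma exact_potential_sum_plus_common:
  fixes f :: "'p::finite \<Rightarrow> real^'n::finite \<Rightarrow> real"
  assumes theta: "\<And>nu x. theta nu x = f nu x + g x"
    and f_local: "\<And>mu nu z x. mu \<noteq> nu \<Longrightarrow> f mu (replace_block owner nu z x) = f mu x"
  shows "exact_potential owner theta (\<lambda>x. (\<Sum>nu\<in>UNIV. f nu x) + g x)"
  unfolding exact_potential_def
proof (intro allI)
  fix nu z x
  have "(\<Sum>mu\<in>UNIV - {nu}. f mu (replace_block owner nu z x)) = (\<Sum>mu\<in>UNIV - {nu}. f mu x)"
    by (rule sum.cong) (auto simp: f_local)
  then show "(\<Sum>mu\<in>UNIV. f mu (replace_block owner nu z x)) + g (replace_block owner nu z x)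
               - ((\<Sum>mu\<in>UNIV. f mu x) + g x)
             = theta nu (replace_block owner nu z x) - theta nu x"
    by (simp add: theta sum.remove[of UNIV nu])
qed

lemma blockvec_replace_block:
  assumes "\<forall>i. owner i \<noteq> nu \<longrightarrow> z i = 0"
  shows "blockvec owner mu (replace_block owner nu z x)
           = (if mu = nu then z else blockvec owner mu x)"
  using assms by (auto simp: blockvec_def replace_block_def)

lemma replace_block_in_prod_set:
  assumes Xs_sub: "\<And>nu. Xs nu \<subseteq> {v. \<forall>i. owner i \<noteq> nu \<longrightarrow> v i = 0}"
    and "z \<in> Xs nu" and "x \<in> prod_set owner Xs"
  shows "replace_block owner nu z x \<in> prod_set owner Xs"
proof -
  have "blockvec owner mu (replace_block owner nu z x) \<in> Xs mu" for mu
    using assms Xs_sub[of nu] by (simp add: blockvec_replace_block subset_iff prod_set_def)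
  then show ?thesis
    by (simp add: prod_set_def)
qed

lemma prod_set_nonempty:
  fixes owner :: "'n::finite \<Rightarrow> 'p"
  assumes Xs_sub: "\<And>nu. Xs nu \<subseteq> {v. \<forall>i. owner i \<noteq> nu \<longrightarrow> v i = 0}"
    and Xs_ne: "\<And>nu. Xs nu \<noteq> {}"
  shows "prod_set owner Xs \<noteq> {}"
proof -
  define z where "z nu = (SOME v. v \<in> Xs nu)" for nu
  have z: "z nu \<in> Xs nu" for nu
    unfolding z_def using Xs_ne[of nu] by (simp add: some_in_eq)
  define x :: "real^'n" where "x = (\<chi> i. z (owner i) i)"
  have "blockvec owner nu x = z nu" for nu
    using Xs_sub[of nu] z[of nu] by (force simp: blockvec_def x_def fun_eq_iff)
  then have "x \<in> prod_set owner Xs"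
    by (simp add: prod_set_def z)
  then show ?thesis
    by blast
qed

lemma nash_eq_if_potential_minimizer:
  assumes "exact_potential owner theta P"
    and Xs_sub: "\<And>nu. Xs nu \<subseteq> {v. \<forall>i. owner i \<noteq> nu \<longrightarrow> v i = 0}"
    and x: "x \<in> prod_set owner Xs"
    and min: "\<And>y. y \<in> prod_set owner Xs \<Longrightarrow> P x \<le> P y"
  shows "is_nash_eq owner Xs theta x"
  unfolding is_nash_eq_def
proof (intro conjI x allI ballI)
  fix nu z
  assume "z \<in> Xs nu"
  then have "P x \<le> P (replace_block owner nu z x)"
    by (intro min replace_block_in_prod_set Xs_sub x)
  moreover have "P (replace_block owner nu z x) - P x
                   = theta nu (replace_block owner nu z x) - theta nu x"
    using assms(1) by (simp add: exact_potential_def)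
  ultimately show "theta nu x \<le> theta nu (replace_block owner nu z x)"
    by linarith
qed

lemma nash_eq_exists_if_potential:
  assumes "exact_potential owner theta P"
    and "continuous_on (prod_set owner Xs) P"
    and "compact (prod_set owner Xs)"
    and "\<And>nu. Xs nu \<subseteq> {v. \<forall>i. owner i \<noteq> nu \<longrightarrow> v i = 0}"
    and "\<And>nu. Xs nu \<noteq> {}"
  shows "\<exists>x. is_nash_eq owner Xs theta x"
proof -
  obtain x where "x \<in> prod_set owner Xs" "\<And>y. y \<in> prod_set owner Xs \<Longrightarrow> P x \<le> P y"
    using continuous_attains_inf[OF assms(3) prod_set_nonempty[OF assms(4,5)] assms(2)] by blast
  then show ?thesis
    using nash_eq_if_potential_minimizer[OF assms(1,4)] by blast
qed

lemma leader_quad_replace_block_other: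
  assumes "mu \<noteq> nu"
  shows "leader_quad owner Q c mu (replace_block owner nu z x) = leader_quad owner Q c mu x"
  using assms by (simp add: leader_quad_def block_def replace_block_def)

definition nep_potential :: "('n::finite \<Rightarrow> 'p) \<Rightarrow> ('p \<Rightarrow> 'n \<Rightarrow> 'n \<Rightarrow> real) \<Rightarrow> ('p \<Rightarrow> 'n \<Rightarrow> real)
    \<Rightarrow> real^'m::finite \<Rightarrow> real^'m^'m \<Rightarrow> (real^'n \<Rightarrow> real^'m) \<Rightarrow> (real^'n \<Rightarrow> real^'m)
    \<Rightarrow> real^'n \<Rightarrow> real" where
  "nep_potential owner Q c a Qy b l x = (\<Sum>nu\<in>UNIV. leader_quad owner Q c nu x)
     + (\<Sum>i\<in>UNIV. a $ i * max ((matrix_inv Qy *v b x) $ i) (l x $ i))"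

lemma nep_potential_exact:
  fixes owner :: "'n::finite \<Rightarrow> 'p::finite"
  shows "exact_potential owner (nep_obj owner Q c a Qy b l) (nep_potential owner Q c a Qy b l)"
  unfolding nep_potential_def[abs_def]
  by (rule exact_potential_sum_plus_common)
    (simp_all add: nep_obj_def leader_quad_replace_block_other)

lemma continuous_on_nep_potential:
  assumes "continuous_on S b" and "continuous_on S l"
  shows "continuous_on S (nep_potential owner Q c a Qy b l)"
  unfolding nep_potential_def[abs_def] leader_quad_def
  by (intro continuous_intros assms
        matrix_vector_mul_bounded_linear[THEN bounded_linear.continuous_on])

lemma mlfg_obj_eq_nep_obj:
  assumes "\<And>i j. i \<noteq> j \<Longrightarrow> Qy $ i $ j = 0" and "\<And>i. Qy $ i $ i > 0"
  shows "mlfg_obj owner Q c a Qy b l = nep_obj owner Q c a Qy b l"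
  by (intro ext) (simp add: mlfg_obj_def nep_obj_def follower_resp_diagonal[OF assms] inner_vec_def)

theorem mainTheorem2:
  fixes owner :: "'n::finite \<Rightarrow> 'p::finite"
    and Q :: "'p \<Rightarrow> 'n \<Rightarrow> 'n \<Rightarrow> real"
    and c :: "'p \<Rightarrow> 'n \<Rightarrow> real"
    and Xs :: "'p \<Rightarrow> ('n \<Rightarrow> real) set"
    and a :: "real^'m::finite"
    and Qy :: "real^'m^'m"
    and b l :: "real^'n \<Rightarrow> real^'m"
  assumes blocks_nonempty: "surj owner"
    and Q_sym: "\<And>nu i j. i \<in> block owner nu \<Longrightarrow> j \<in> block owner nu \<Longrightarrow> Q nu i j = Q nu j i"
    and Q_pd: "\<And>nu v. (\<exists>i \<in> block owner nu. v i \<noteq> 0) \<Longrightarrow>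
                 (\<Sum>i\<in>block owner nu. \<Sum>j\<in>block owner nu. v i * Q nu i j * v j) > 0"
    and Xs_sub: "\<And>nu. Xs nu \<subseteq> {v. \<forall>i. owner i \<noteq> nu \<longrightarrow> v i = 0}"
    and Xs_ne: "\<And>nu. Xs nu \<noteq> {}"
    and X_convex: "convex (prod_set owner Xs)"
    and X_compact: "compact (prod_set owner Xs)"
    and a_nonneg: "\<And>i. a $ i \<ge> 0"
    and Qy_diag: "\<And>i j. i \<noteq> j \<Longrightarrow> Qy $ i $ j = 0"
    and Qy_pos: "\<And>i. Qy $ i $ i > 0"
    and b_diff: "\<And>x. b differentiable (at x)"
    and l_diff: "\<And>x. l differentiable (at x)"
    and b_convex: "\<And>i. convex_on (prod_set owner Xs) (\<lambda>x. b x $ i)"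
    and l_convex: "\<And>i. convex_on (prod_set owner Xs) (\<lambda>x. l x $ i)"
  shows "(\<exists>x. is_nash_eq owner Xs (nep_obj owner Q c a Qy b l) x) \<and>
         (\<exists>x. is_nash_eq owner Xs (mlfg_obj owner Q c a Qy b l) x)"
proof -
  have "continuous_on (prod_set owner Xs) b" "continuous_on (prod_set owner Xs) l"
    using b_diff l_diff
    by (simp_all add: continuous_at_imp_continuous_on differentiable_imp_continuous_within)
  then have "continuous_on (prod_set owner Xs) (nep_potential owner Q c a Qy b l)"
    by (rule continuous_on_nep_potential)
  then have "\<exists>x. is_nash_eq owner Xs (nep_obj owner Q c a Qy b l) x"
    by (rule nash_eq_exists_if_potential[OF nep_potential_exact _ X_compact Xs_sub Xs_ne])
  then show ?thesis
    by (simp add: mlfg_obj_eq_nep_obj[OF Qy_diag Qy_pos])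
qed

end
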